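(* Fix parameters $\tau\in(0,1/100)$ and $M\ge2$, and let $\theta=2+\tau$. Let $G=(\mu,\mathcal{V},\mathcal{W},\mathcal{E},\mathcal{P},f,g)$ be a maximal, non-trivial and structured GCD graph, let $p\in\mathcal{R}(G)$ be a prime with $p>C_6$, and let $k_p\in\mathbb{Z}$ be such that \[ \big(\operatorname{e}_p(v),\operatorname{e}_p(w)\big)\in\big\{(k_p-1,k_p),(k_p,k_p-1),(k_p,k_p),(k_p,k_p+1),(k_p+1,k_p)\big\} \] for all $(v,w)\in\mathcal{E}$. Then there is a non-trivial and maximal GCD subgraph $G'$ of $G$ with multiplicative data $(\mathcal{P}',f',g')$ such that: (a) $\mathcal{P}'=\mathcal{P}\cup\{p\}$; (b) $\mathcal{R}(G')\subseteq\mathcal{R}(G)\setminus\{p\}$; (c) $f'(p),g'(p)\in\{k_p-1,k_p,k_p+1\}$; (d) if $k_p>0$, then $G'$ is a denominator-exact GCD subgraph of $G$, whereas if $k_p<0$, then $G'$ is a numerator-exact GCD subgraph of $G$; (e) $q(G')\geqslant q(G) \big(1-\mathbbm{1}_{f'(p)=g'(p)=k_p}/p\big)^2 \big(1-1/p^{1+\frac{\tau}{4}} \big)$.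
   Context: For a prime $p$, $k\in\mathbb{Z}$ and $\rho\in\mathbb{Q}_{>0}$, write $\operatorname{e}_p(\rho)=k$ if $\rho=p^ka/q$ with $a,q\in\mathbb{N}$, $p\nmid aq$. For real $t$, $t^+=\max\{t,0\}$, $t^-=\max\{-t,0\}$. Weighted bipartite graph: $(\mu,\mathcal{V},\mathcal{W},\mathcal{E})$ with $\mu:\mathbb{R}_{>0}\to\mathbb{R}_{>0}$, $\mathcal{V},\mathcal{W}$ finite sets of positive reals, $\mathcal{E}\subseteq\mathcal{V}\times\mathcal{W}$; $\mu(\mathcal{T})=\sum_{t\in\mathcal{T}}\mu(t)$, $\mu(\mathcal{E})=\sum_{(v,w)\in\mathcal{E}}\mu(v)\mu(w)$; edge density $\delta=\mu(\mathcal{E})/(\mu(\mathcal{V})\mu(\mathcal{W}))$ if $\mathcal{E}\neq\emptyset$, else $0$; $\mu^{(\theta)}=\delta^\theta\mu(\mathcal{V})\mu(\mathcal{W})$. A subgraph has $\mathcal{V}'\subseteq\mathcal{V}$, $\mathcal{W}'\subseteq\mathcal{W}$, $\mathcal{E}'\subseteq\mathcal{E}\cap(\mathcal{V}'\times\mathcal{W}')$, same $\mu$. "Maximal" means $\mu^{(\theta)}(G)\ge\mu^{(\theta)}(G')$ for every subgraph $G'$ (with $\theta=2+\tau$). GCD graph: a septuple $G=(\mu,\mathcal{V},\mathcal{W},\mathcal{E},\mathcal{P},f,g)$ where $(\mu,\mathcal{V},\mathcal{W},\mathcal{E})$ is a weighted bipartite graph with $\mathcal{V},\mathcal{W}\subset\mathbb{Q}_{>0}$,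 $\mathcal{P}$ is a set of primes ($(\mathcal{P},f,g)$ is the "multiplicative data"), $f,g:\mathcal{P}\to\mathbb{Z}$, and for all $p\in\mathcal{P}$ and all $(a/q,b/r)\in\mathcal{V}\times\mathcal{W}$ with $\gcd(a,q)=\gcd(b,r)=1$: $p^{f^+(p)}\mid a$, $p^{g^+(p)}\mid b$, $p^{f^-(p)}\mid q$, $p^{g^-(p)}\mid r$, and if $(a/q,b/r)\in\mathcal{E}$ then the exact power of $p$ dividing $\gcd(a,b)$ is $p^{\min\{f^+(p),g^+(p)\}}$ and that dividing $\gcd(q,r)$ is $p^{\min\{f^-(p),g^-(p)\}}$. $G$ is non-trivial if $\mathcal{E}\neq\emptyset$. Quality: $q(G)=\mu^{(\theta)}(G)\prod_{p\in\mathcal{P}}p^{|f(p)-g(p)|}$. A GCD subgraph $G'=(\mu,\mathcal{V}',\mathcal{W}',\mathcal{E}',\mathcal{P}',f',g')$ of $G$ has $\mathcal{V}'\subseteq\mathcal{V}$, $\mathcal{W}'\subseteq\mathcal{W}$, $\mathcal{E}'\subseteq\mathcal{E}$, $\mathcal{P}'\supseteq\mathcal{P}$, $f'|_{\mathcal{P}}=f$, $g'|_{\mathcal{P}}=g$. It is numerator-exact if for every $p\in\mathcal{P}'\setminus\mathcal{P}$ and every $(a/q,b/r)\in\mathcal{V}'\times\mathcal{W}'$ in lowest terms, $p^{f'^+(p)}$ exactly divides $a$ and $p^{g'^+(p)}$ exactly divides $b$; it is denominator-exact if for every such $p$ and $(a/q,b/r)$, $p^{f'^-(p)}$ exactly divides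 $q$ and $p^{g'^-(p)}$ exactly divides $r$. $\mathcal{R}(G)$ is the set of primes $p\notin\mathcal{P}$ for which there is $(a/q,b/r)\in\mathcal{E}$ with $\gcd(a,q)=\gcd(b,r)=1$ and $p\mid\gcd(a,b)\gcd(q,r)$. $G$ is structured if for each $p\in\mathcal{R}(G)$ there is $k\in\mathbb{Z}$ with $(\operatorname{e}_p(v)-k,\operatorname{e}_p(w)-k)\in\{(-1,0),(0,-1),(0,0),(0,1),(1,0)\}$ for all $(v,w)\in\mathcal{E}$. Constants: $C_1=10^4/\tau$, $C_2=10MC_1^3$, $C_4=10^{10}M^2C_2^2$, $C_6=\max\{C_4,10^4MC_2,C_2^{10/\tau}\}$. *)

theory Defs
  imports "HOL-Computational_Algebra.Computational_Algebra"
begin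

(* A GCD graph (mu, V, W, E, P, f, g).  Vertices are positive rationals;
   mu is only relevant on positive rationals. *)
record gcd_graph =
  mu :: "rat \<Rightarrow> real"
  Vs :: "rat set"
  Ws :: "rat set"
  Es :: "(rat \<times> rat) set"
  Ps :: "nat set"
  ff :: "nat \<Rightarrow> int"
  gg :: "nat \<Rightarrow> int"

definition num :: "rat \<Rightarrow> int" where "num v = fst (quotient_of v)"
definition den :: "rat \<Rightarrow> int" where "den v = snd (quotient_of v)"

definition ep :: "nat \<Rightarrow> rat \<Rightarrow> int" where
  "ep p v = int (multiplicity (int p) (num v)) - int (multiplicity (int p) (den v))"

definition pos_part :: "int \<Rightarrow> nat" where "pos_part t = nat t"
definition neg_part :: "int \<Rightarrow> nat" where "neg_part t = nat (- t)"

definition muS :: "gcd_graph \<Rightarrow> rat set \<Rightarrow> real" where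
  "muS G T = (\<Sum>t\<in>T. mu G t)"

definition muE :: "gcd_graph \<Rightarrow> real" where
  "muE G = (\<Sum>(v,w)\<in>Es G. mu G v * mu G w)"

definition density :: "gcd_graph \<Rightarrow> real" where
  "density G = (if Es G = {} then 0 else muE G / (muS G (Vs G) * muS G (Ws G)))"

definition mutheta :: "real \<Rightarrow> gcd_graph \<Rightarrow> real" where
  "mutheta \<theta> G = density G powr \<theta> * muS G (Vs G) * muS G (Ws G)"

definition maximal :: "real \<Rightarrow> gcd_graph \<Rightarrow> bool" where
  "maximal \<theta> G = (\<forall>V' W' E'. V' \<subseteq> Vs G \<longrightarrow> W' \<subseteq> Ws G \<longrightarrow> E' \<subseteq> Es G \<inter> (V' \<times> W') \<longrightarrow>
       mutheta \<theta> (G\<lparr>Vs := V', Ws := W', Es := E'\<rparr>) \<le> mutheta \<theta> G)"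

definition is_gcd_graph :: "gcd_graph \<Rightarrow> bool" where
  "is_gcd_graph G \<longleftrightarrow>
     (\<forall>x::rat. x > 0 \<longrightarrow> mu G x > 0) \<and>
     finite (Vs G) \<and> finite (Ws G) \<and>
     (\<forall>v\<in>Vs G. v > 0) \<and> (\<forall>w\<in>Ws G. w > 0) \<and>
     Es G \<subseteq> Vs G \<times> Ws G \<and>
     finite (Ps G) \<and> (\<forall>p\<in>Ps G. prime p) \<and>
     (\<forall>p\<in>Ps G. \<forall>v\<in>Vs G. \<forall>w\<in>Ws G.
        (int p) ^ pos_part (ff G p) dvd num v \<and>
        (int p) ^ pos_part (gg G p) dvd num w \<and>
        (int p) ^ neg_part (ff G p) dvd den v \<and>
        (int p) ^ neg_part (gg G p) dvd den w \<and>
        ((v, w) \<in> Es G \<longrightarrow>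
          multiplicity (int p) (gcd (num v) (num w)) = min (pos_part (ff G p)) (pos_part (gg G p)) \<and>
          multiplicity (int p) (gcd (den v) (den w)) = min (neg_part (ff G p)) (neg_part (gg G p))))"

definition nontrivial :: "gcd_graph \<Rightarrow> bool" where
  "nontrivial G \<longleftrightarrow> Es G \<noteq> {}"

definition quality :: "real \<Rightarrow> gcd_graph \<Rightarrow> real" where
  "quality \<theta> G = mutheta \<theta> G * (\<Prod>p\<in>Ps G. real p ^ nat \<bar>ff G p - gg G p\<bar>)"

definition is_gcd_subgraph :: "gcd_graph \<Rightarrow> gcd_graph \<Rightarrow> bool" where
  "is_gcd_subgraph G' G \<longleftrightarrow> is_gcd_graph G' \<and> mu G' = mu G \<and>
     Vs G' \<subseteq> Vs G \<and> Ws G' \<subseteq> Ws G \<and> Es G' \<subseteq> Es G \<and> Ps G \<subseteq> Ps G' \<and>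
     (\<forall>p\<in>Ps G. ff G' p = ff G p \<and> gg G' p = gg G p)"

definition numerator_exact :: "gcd_graph \<Rightarrow> gcd_graph \<Rightarrow> bool" where
  "numerator_exact G' G \<longleftrightarrow> is_gcd_subgraph G' G \<and>
     (\<forall>p\<in>Ps G' - Ps G. \<forall>v\<in>Vs G'. \<forall>w\<in>Ws G'.
        multiplicity (int p) (num v) = pos_part (ff G' p) \<and>
        multiplicity (int p) (num w) = pos_part (gg G' p))"

definition denominator_exact :: "gcd_graph \<Rightarrow> gcd_graph \<Rightarrow> bool" where
  "denominator_exact G' G \<longleftrightarrow> is_gcd_subgraph G' G \<and>
     (\<forall>p\<in>Ps G' - Ps G. \<forall>v\<in>Vs G'. \<forall>w\<in>Ws G'.
        multiplicity (int p) (den v) = neg_part (ff G' p) \<and>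
        multiplicity (int p) (den w) = neg_part (gg G' p))"

definition RR :: "gcd_graph \<Rightarrow> nat set" where
  "RR G = {p. prime p \<and> p \<notin> Ps G \<and>
     (\<exists>(v,w)\<in>Es G. int p dvd gcd (num v) (num w) * gcd (den v) (den w))}"

definition structured :: "gcd_graph \<Rightarrow> bool" where
  "structured G \<longleftrightarrow> (\<forall>p\<in>RR G. \<exists>k::int. \<forall>(v,w)\<in>Es G.
     (ep p v - k, ep p w - k) \<in> {(-1,0),(0,-1),(0,0),(0,1),(1,0)})"

definition C1 :: "real \<Rightarrow> real" where "C1 \<tau> = 10^4 / \<tau>"
definition C2 :: "real \<Rightarrow> real \<Rightarrow> real" where "C2 \<tau> M = 10 * M * (C1 \<tau>)^3"
definition C4 :: "real \<Rightarrow> real \<Rightarrow> real" where "C4 \<tau> M = 10^10 * M^2 * (C2 \<tau> M)^2"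
definition C6 :: "real \<Rightarrow> real \<Rightarrow> real" where
  "C6 \<tau> M = max (C4 \<tau> M) (max (10^4 * M * C2 \<tau> M) (C2 \<tau> M powr (10 / \<tau>)))"

end

(*
  Since p lies in R(G), some edge has both p-adic exponents of the same sign, so k_p <> 0;
  put s = sgn k_p. Every edge then has both exponents in {k_p, k_p + s} (never both equal
  to k_p + s), or the exponent k_p - s at v, or the exponent k_p - s at w. Restricting G to
  the corresponding vertex classes and adjoining p with exponents (k_p, k_p),
  (k_p - s, k_p), (k_p, k_p - s) gives three GCD subgraphs whose vertex rectangles have
  total mass at most mu(V) mu(W); all exponents involved have the sign of k_p, which makes
  them exact on the other side.

  Since (e, a) |-> (e/a)^theta a is convex and homogeneous, mu^(theta)(G) is at most the
  sum of mu^(theta) over the pieces, so for weights r_i of sum < 1 some piece has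
  mu^(theta) >= r_i mu^(theta)(G). The weights c (1 - 1/p)^2, c/p, c/p with
  c = 1 - p^(-1-tau/4) sum to c (1 + 1/p^2) < 1, and the factor p lost in the last two
  weights is regained in the quality. A maximal subgraph of the chosen piece is G'.
*)

theory Submission
  imports Defs "HOL-Analysis.Analysis"
begin

section \<open>Valuations of numerators and denominators\<close>

lemma den_pos: "0 < den v"
  by (simp add: den_def quotient_of_denom_pos')

lemma num_pos:
  assumes "0 < v"
  shows "0 < num v"
proof -
  have "0 < rat_of_int (num v) / rat_of_int (den v)"
    using assms quotient_of_div[of v "num v" "den v"] by (simp add: num_def den_def)
  then show ?thesis
    using den_pos[of v] by (simp add: zero_less_divide_iff)
qed

lemma prime_not_unit_int: "prime p \<Longrightarrow> \<not> is_unit (int p)"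
  by (metis not_prime_unit prime_nat_int_transfer)

lemma coprime_num_den: "coprime (num v) (den v)"
  by (simp add: num_def den_def quotient_of_coprime)

lemma multiplicity_num_den:
  assumes "0 < v" "prime p"
  shows "multiplicity (int p) (num v) = pos_part (ep p v)"
    and "multiplicity (int p) (den v) = neg_part (ep p v)"
proof -
  have "\<not> (int p dvd num v \<and> int p dvd den v)"
    using coprime_num_den[of v] prime_not_unit_int[OF assms(2)] coprime_common_divisor by blast
  then have "multiplicity (int p) (num v) = 0 \<or> multiplicity (int p) (den v) = 0"
    by (metis not_dvd_imp_multiplicity_0)
  then show "multiplicity (int p) (num v) = pos_part (ep p v)"
    and "multiplicity (int p) (den v) = neg_part (ep p v)"
    by (auto simp: ep_def pos_part_def neg_part_def)
qed

lemma prime_power_dvd_num_den_iff: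
  assumes "0 < v" "prime p"
  shows "int p ^ n dvd num v \<longleftrightarrow> n \<le> pos_part (ep p v)"
    and "int p ^ n dvd den v \<longleftrightarrow> n \<le> neg_part (ep p v)"
  using power_dvd_iff_le_multiplicity[of "num v" "int p" n]
    power_dvd_iff_le_multiplicity[of "den v" "int p" n]
    num_pos[OF assms(1)] den_pos[of v] multiplicity_num_den[OF assms]
    prime_not_unit_int[OF assms(2)]
  by auto

lemma multiplicity_gcd_num_den:
  assumes "0 < v" "0 < w" "prime p"
  shows "multiplicity (int p) (gcd (num v) (num w)) = min (pos_part (ep p v)) (pos_part (ep p w))"
    and "multiplicity (int p) (gcd (den v) (den w)) = min (neg_part (ep p v)) (neg_part (ep p w))"
  using multiplicity_gcd[of "num v" "num w" "int p"] multiplicity_gcd[of "den v" "den w" "int p"]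
    num_pos[OF assms(1)] num_pos[OF assms(2)] den_pos[of v] den_pos[of w]
    multiplicity_num_den[OF assms(1,3)] multiplicity_num_den[OF assms(2,3)]
    prime_not_unit_int[OF assms(3)] assms(3)
  by auto

lemma RR_exponents_same_sign:
  assumes "is_gcd_graph G" "p \<in> RR G"
  shows "\<exists>(v, w)\<in>Es G. (0 < ep p v \<and> 0 < ep p w) \<or> (ep p v < 0 \<and> ep p w < 0)"
proof -
  from assms(2) obtain v w where p: "prime p" and vw: "(v, w) \<in> Es G"
    and "int p dvd gcd (num v) (num w) * gcd (den v) (den w)"
    by (auto simp: RR_def)
  then have "int p dvd gcd (num v) (num w) \<or> int p dvd gcd (den v) (den w)"
    by (simp add: prime_dvd_mult_iff)
  moreover have "0 < v" "0 < w"
    using assms(1) vw by (auto simp: is_gcd_graph_def)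
  ultimately have "(1 \<le> pos_part (ep p v) \<and> 1 \<le> pos_part (ep p w)) \<or>
      (1 \<le> neg_part (ep p v) \<and> 1 \<le> neg_part (ep p w))"
    using prime_power_dvd_num_den_iff[OF \<open>0 < v\<close> p, of 1]
      prime_power_dvd_num_den_iff[OF \<open>0 < w\<close> p, of 1]
    by auto
  then show ?thesis
    by (intro bexI[OF _ vw]) (auto simp: pos_part_def neg_part_def)
qed

section \<open>Induced subgraphs and adjoining a prime\<close>

definition induced_subgraph :: "gcd_graph \<Rightarrow> rat set \<Rightarrow> rat set \<Rightarrow> gcd_graph" where
  "induced_subgraph G V W = G\<lparr>Vs := V, Ws := W, Es := Es G \<inter> V \<times> W\<rparr>"

definition adjoin_prime :: "gcd_graph \<Rightarrow> nat \<Rightarrow> int \<Rightarrow> int \<Rightarrow> gcd_graph" where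
  "adjoin_prime G p f g = G\<lparr>Ps := insert p (Ps G), ff := (ff G)(p := f), gg := (gg G)(p := g)\<rparr>"

lemma induced_subgraph_simps [simp]:
  "Vs (induced_subgraph G V W) = V" "Ws (induced_subgraph G V W) = W"
  "Es (induced_subgraph G V W) = Es G \<inter> V \<times> W" "mu (induced_subgraph G V W) = mu G"
  "Ps (induced_subgraph G V W) = Ps G" "ff (induced_subgraph G V W) = ff G"
  "gg (induced_subgraph G V W) = gg G"
  by (simp_all add: induced_subgraph_def)

lemma muS_induced_subgraph [simp]: "muS (induced_subgraph G V W) = muS G"
  by (rule ext) (simp add: muS_def induced_subgraph_def)

lemma mutheta_adjoin_prime [simp]: "mutheta \<theta> (adjoin_prime G p f g) = mutheta \<theta> G"
  by (simp add: mutheta_def Defs.density_def muE_def muS_def adjoin_prime_def)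

lemma is_gcd_subgraph_refl: "is_gcd_graph G \<Longrightarrow> is_gcd_subgraph G G"
  by (auto simp: is_gcd_subgraph_def)

lemma is_gcd_graph_restrict:
  assumes "is_gcd_graph H" "V \<subseteq> Vs H" "W \<subseteq> Ws H" "E \<subseteq> Es H \<inter> V \<times> W"
  shows "is_gcd_graph (H\<lparr>Vs := V, Ws := W, Es := E\<rparr>)"
  using assms finite_subset unfolding is_gcd_graph_def by (simp add: subset_iff) blast

lemma is_gcd_subgraph_restrict:
  assumes "is_gcd_subgraph H G" "V \<subseteq> Vs H" "W \<subseteq> Ws H" "E \<subseteq> Es H \<inter> V \<times> W"
  shows "is_gcd_subgraph (H\<lparr>Vs := V, Ws := W, Es := E\<rparr>) G"
  using assms is_gcd_graph_restrict[of H V W E] by (auto simp: is_gcd_subgraph_def)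

lemma is_gcd_subgraph_induced:
  assumes "is_gcd_graph G" "V \<subseteq> Vs G" "W \<subseteq> Ws G"
  shows "is_gcd_subgraph (induced_subgraph G V W) G"
  unfolding induced_subgraph_def
  using assms by (intro is_gcd_subgraph_restrict is_gcd_subgraph_refl) auto

lemma is_gcd_subgraph_adjoin_prime:
  assumes H: "is_gcd_subgraph H G" and p: "prime p" "p \<notin> Ps H"
    and V: "\<forall>v\<in>Vs H. pos_part f \<le> pos_part (ep p v) \<and> neg_part f \<le> neg_part (ep p v)"
    and W: "\<forall>w\<in>Ws H. pos_part g \<le> pos_part (ep p w) \<and> neg_part g \<le> neg_part (ep p w)"
    and E: "\<forall>(v, w)\<in>Es H.
              min (pos_part (ep p v)) (pos_part (ep p w)) = min (pos_part f) (pos_part g) \<and>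
              min (neg_part (ep p v)) (neg_part (ep p w)) = min (neg_part f) (neg_part g)"
  shows "is_gcd_subgraph (adjoin_prime H p f g) G"
proof -
  have Hg: "is_gcd_graph H"
    using H by (simp add: is_gcd_subgraph_def)
  have at_p: "int p ^ pos_part f dvd num v \<and> int p ^ pos_part g dvd num w \<and>
      int p ^ neg_part f dvd den v \<and> int p ^ neg_part g dvd den w \<and>
      ((v, w) \<in> Es H \<longrightarrow>
        multiplicity (int p) (gcd (num v) (num w)) = min (pos_part f) (pos_part g) \<and>
        multiplicity (int p) (gcd (den v) (den w)) = min (neg_part f) (neg_part g))"
    if "v \<in> Vs H" "w \<in> Ws H" for v w
  proof -
    have "0 < v" "0 < w"
      using Hg that by (auto simp: is_gcd_graph_def)
    then show ?thesis
      using that V W E prime_power_dvd_num_den_iff[OF _ p(1)] multiplicity_gcd_num_den[OF _ _ p(1)]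
      by auto
  qed
  have "is_gcd_graph (adjoin_prime H p f g)"
    using Hg p at_p unfolding is_gcd_graph_def adjoin_prime_def by auto
  then show ?thesis
    using H p by (auto simp: is_gcd_subgraph_def adjoin_prime_def)
qed

lemma Es_subset: "is_gcd_graph G \<Longrightarrow> Es G \<subseteq> Vs G \<times> Ws G"
  by (simp add: is_gcd_graph_def)

lemma finite_Es: "is_gcd_graph G \<Longrightarrow> finite (Es G)"
  by (auto simp: is_gcd_graph_def intro: finite_subset)

lemma mu_pos_vertex: "is_gcd_graph G \<Longrightarrow> x \<in> Vs G \<union> Ws G \<Longrightarrow> 0 < mu G x"
  by (auto simp: is_gcd_graph_def)

lemma finite_vertex_set: "is_gcd_graph G \<Longrightarrow> A \<subseteq> Vs G \<union> Ws G \<Longrightarrow> finite A"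
  by (auto simp: is_gcd_graph_def intro: finite_subset)

lemma muS_nonneg: "is_gcd_graph G \<Longrightarrow> A \<subseteq> Vs G \<union> Ws G \<Longrightarrow> 0 \<le> muS G A"
  unfolding muS_def by (intro sum_nonneg less_imp_le mu_pos_vertex) auto

lemma muS_pos: "is_gcd_graph G \<Longrightarrow> A \<subseteq> Vs G \<union> Ws G \<Longrightarrow> A \<noteq> {} \<Longrightarrow> 0 < muS G A"
  unfolding muS_def by (intro sum_pos finite_vertex_set mu_pos_vertex) auto

lemma muS_mono: "is_gcd_graph G \<Longrightarrow> A \<subseteq> B \<Longrightarrow> B \<subseteq> Vs G \<union> Ws G \<Longrightarrow> muS G A \<le> muS G B"
  unfolding muS_def by (rule sum_mono2[OF finite_vertex_set]) (auto intro!: less_imp_le mu_pos_vertex)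

lemma muS_union:
  "is_gcd_graph G \<Longrightarrow> A \<inter> B = {} \<Longrightarrow> A \<union> B \<subseteq> Vs G \<union> Ws G \<Longrightarrow>
    muS G (A \<union> B) = muS G A + muS G B"
  unfolding muS_def by (intro sum.union_disjoint finite_vertex_set) auto

lemma mutheta_eq:
  "mutheta \<theta> K = (muE K / (muS K (Vs K) * muS K (Ws K))) powr \<theta> * (muS K (Vs K) * muS K (Ws K))"
  by (cases "Es K = {}") (simp_all add: mutheta_def Defs.density_def muE_def)

lemma mutheta_pos:
  assumes "is_gcd_graph G" "nontrivial G"
  shows "0 < mutheta \<theta> G"
proof -
  obtain v w where vw: "(v, w) \<in> Es G"
    using assms(2) by (auto simp: nontrivial_def)
  note E = Es_subset[OF assms(1)] finite_Es[OF assms(1)]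
  have "0 < muE G"
    unfolding muE_def using E vw assms(1)
    by (intro sum_pos) (auto intro!: mult_pos_pos mu_pos_vertex)
  moreover have "0 < muS G (Vs G)" "0 < muS G (Ws G)"
    using E vw by (auto intro!: muS_pos assms(1))
  ultimately show ?thesis
    by (simp add: mutheta_eq)
qed

lemma muE_induced_subgraph:
  "muE (induced_subgraph G V W) = (\<Sum>(v, w)\<in>Es G \<inter> V \<times> W. mu G v * mu G w)"
  by (simp add: muE_def induced_subgraph_def)

lemma muE_induced_subgraph_nonneg: "is_gcd_graph G \<Longrightarrow> 0 \<le> muE (induced_subgraph G V W)"
  unfolding muE_induced_subgraph using Es_subset[of G] mu_pos_vertex[of G]
  by (intro sum_nonneg) (fastforce intro!: mult_nonneg_nonneg less_imp_le)

lemma nonempty_if_muE_induced_pos: "0 < muE (induced_subgraph G V W) \<Longrightarrow> V \<noteq> {} \<and> W \<noteq> {}"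
  by (cases "V = {} \<or> W = {}") (auto simp: muE_induced_subgraph)

lemma muE_eq_sum_induced_subgraphs:
  assumes "finite (Es G)" "finite I" "disjoint_family_on (\<lambda>i. V i \<times> W i) I"
    and "Es G \<subseteq> (\<Union>i\<in>I. V i \<times> W i)"
  shows "muE G = (\<Sum>i\<in>I. muE (induced_subgraph G (V i) (W i)))"
proof -
  define part where "part i = Es G \<inter> V i \<times> W i" for i
  have "Es G = (\<Union>i\<in>I. part i)"
    using assms(4) by (auto simp: part_def)
  then have "muE G = (\<Sum>i\<in>I. \<Sum>(v, u)\<in>part i. mu G v * mu G u)"
    unfolding muE_def using assms(1-3)
    by (simp only:) (rule sum.UNION_disjoint, auto simp: part_def disjoint_family_on_def)
  then show ?thesis
    by (simp add: part_def muE_induced_subgraph)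
qed

section \<open>A density increment\<close>

lemma perspective_powr_antimono:
  fixes S W A :: real
  assumes "1 \<le> \<theta>" "0 \<le> S" "0 < W" "W \<le> A"
  shows "(S / A) powr \<theta> * A \<le> (S / W) powr \<theta> * W"
proof -
  have eq: "(S / X) powr \<theta> * X = S powr \<theta> * X powr (1 - \<theta>)" if "0 < X" for X
    using that assms(2) by (simp add: powr_divide powr_diff)
  have "A powr (1 - \<theta>) \<le> W powr (1 - \<theta>)"
    using assms by (intro powr_mono2') auto
  then show ?thesis
    using assms eq[of A] eq[of W] by (simp add: mult_left_mono)
qed

text \<open>The map \<open>(s, w) \<mapsto> (s/w)\<^sup>\<theta> w\<close> is the perspective of the convex function
  \<open>x\<^sup>\<theta>\<close>; Jensen's inequality with weights \<open>w\<^sub>i / \<Sum>w\<close> makes it subadditive.\<close>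

lemma perspective_powr_jensen:
  fixes s w :: "'i \<Rightarrow> real"
  assumes "1 \<le> \<theta>" "finite J" "J \<noteq> {}" and pos: "\<forall>i\<in>J. 0 < s i \<and> 0 < w i"
  shows "(sum s J / sum w J) powr \<theta> * sum w J \<le> (\<Sum>i\<in>J. (s i / w i) powr \<theta> * w i)"
proof -
  define WJ where "WJ = sum w J"
  have "0 < WJ"
    unfolding WJ_def using assms(2,3) pos by (intro sum_pos) auto
  have avg: "(\<Sum>i\<in>J. (w i / WJ) *\<^sub>R (s i / w i)) = sum s J / WJ"
    using pos by (auto simp: sum_divide_distrib intro!: sum.cong)
  have "(sum s J / WJ) powr \<theta> \<le> (\<Sum>i\<in>J. (w i / WJ) * (s i / w i) powr \<theta>)"
    unfolding avg[symmetric]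
  proof (rule convex_on_sum[OF assms(2,3) powr_convex[OF assms(1)]])
    show "(\<Sum>i\<in>J. w i / WJ) = 1"
      using \<open>0 < WJ\<close> by (simp add: WJ_def flip: sum_divide_distrib)
  qed (use pos \<open>0 < WJ\<close> in auto)
  also have "\<dots> = (\<Sum>i\<in>J. (s i / w i) powr \<theta> * w i) / WJ"
    by (simp add: sum_divide_distrib mult.commute)
  finally show ?thesis
    using \<open>0 < WJ\<close> by (simp add: WJ_def pos_le_divide_eq)
qed

lemma perspective_powr_sum_le:
  fixes s w :: "'i \<Rightarrow> real"
  assumes "1 \<le> \<theta>" "finite I"
    and nonneg: "\<forall>i\<in>I. 0 \<le> s i \<and> 0 \<le> w i" and pos: "\<forall>i\<in>I. 0 < s i \<longrightarrow> 0 < w i"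
    and "sum w I \<le> A"
  shows "(sum s I / A) powr \<theta> * A \<le> (\<Sum>i\<in>I. (s i / w i) powr \<theta> * w i)"
proof -
  define J where "J = {i\<in>I. 0 < s i}"
  have J: "finite J" "J \<subseteq> I"
    using assms(2) by (auto simp: J_def)
  have sJ: "sum s I = sum s J"
    using nonneg assms(2) by (intro sum.mono_neutral_right) (auto simp: J_def)
  show ?thesis
  proof (cases "J = {}")
    case True
    then show ?thesis
      using sJ nonneg by (simp add: sum_nonneg)
  next
    case False
    have "0 < sum w J"
      using False J pos by (intro sum_pos) (auto simp: J_def)
    have "sum w J \<le> sum w I"
      using nonneg J assms(2) by (intro sum_mono2) auto
    have "(sum s I / A) powr \<theta> * A \<le> (sum s J / sum w J) powr \<theta> * sum w J"
      unfolding sJ using nonneg J \<open>0 < sum w J\<close> \<open>sum w J \<le> sum w I\<close> \<open>sum w I \<le> A\<close>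
      by (intro perspective_powr_antimono[OF assms(1)] sum_nonneg) auto
    also have "\<dots> \<le> (\<Sum>i\<in>J. (s i / w i) powr \<theta> * w i)"
      using J pos False by (intro perspective_powr_jensen[OF assms(1)]) (auto simp: J_def)
    also have "\<dots> = (\<Sum>i\<in>I. (s i / w i) powr \<theta> * w i)"
      using nonneg assms(2) by (intro sum.mono_neutral_left) (auto simp: J_def)
    finally show ?thesis .
  qed
qed

lemma exists_dense_induced_subgraph:
  fixes V W :: "'i \<Rightarrow> rat set" and r :: "'i \<Rightarrow> real"
  assumes G: "is_gcd_graph G" "nontrivial G" and "1 \<le> \<theta>" "finite I"
    and sub: "\<forall>i\<in>I. V i \<subseteq> Vs G \<and> W i \<subseteq> Ws G"
    and disj: "disjoint_family_on (\<lambda>i. V i \<times> W i) I"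
    and cover: "Es G \<subseteq> (\<Union>i\<in>I. V i \<times> W i)"
    and area: "(\<Sum>i\<in>I. muS G (V i) * muS G (W i)) \<le> muS G (Vs G) * muS G (Ws G)"
    and "sum r I < 1"
  shows "\<exists>i\<in>I. r i * mutheta \<theta> G \<le> mutheta \<theta> (induced_subgraph G (V i) (W i))"
proof (rule ccontr)
  assume "\<not> ?thesis"
  then have less: "\<forall>i\<in>I. mutheta \<theta> (induced_subgraph G (V i) (W i)) < r i * mutheta \<theta> G"
    by auto
  define s where "s i = muE (induced_subgraph G (V i) (W i))" for i
  define w where "w i = muS G (V i) * muS G (W i)" for i
  have nonneg: "\<forall>i\<in>I. 0 \<le> s i \<and> 0 \<le> w i"
    using sub unfolding s_def w_def
    by (auto intro!: muE_induced_subgraph_nonneg[OF G(1)] mult_nonneg_nonneg muS_nonneg[OF G(1)])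
  have pos: "\<forall>i\<in>I. 0 < s i \<longrightarrow> 0 < w i"
    using sub unfolding s_def w_def
    by (auto dest!: nonempty_if_muE_induced_pos intro!: mult_pos_pos muS_pos[OF G(1)])
  have "muE G = sum s I"
    unfolding s_def using finite_Es[OF G(1)] \<open>finite I\<close> disj cover
    by (rule muE_eq_sum_induced_subgraphs)
  then have "mutheta \<theta> G \<le> (\<Sum>i\<in>I. (s i / w i) powr \<theta> * w i)"
    using perspective_powr_sum_le[OF \<open>1 \<le> \<theta>\<close> \<open>finite I\<close> nonneg pos] area
    by (simp add: mutheta_eq[of \<theta> G] w_def)
  also have "\<dots> = (\<Sum>i\<in>I. mutheta \<theta> (induced_subgraph G (V i) (W i)))"
    by (simp add: mutheta_eq s_def w_def)
  also have "\<dots> < (\<Sum>i\<in>I. r i * mutheta \<theta> G)"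
    using less cover G(2) by (intro sum_strict_mono \<open>finite I\<close>) (auto simp: nontrivial_def)
  finally have "mutheta \<theta> G < sum r I * mutheta \<theta> G"
    by (simp add: sum_distrib_right)
  then show False
    using mutheta_pos[OF G, of \<theta>] \<open>sum r I < 1\<close> by (simp add: mult_less_cancel_right2)
qed

section \<open>Passing to a maximal subgraph\<close>

lemma exists_maximal_restriction:
  assumes "finite (Vs H)" "finite (Ws H)" "Es H \<subseteq> Vs H \<times> Ws H"
  obtains V W E where "V \<subseteq> Vs H" "W \<subseteq> Ws H" "E \<subseteq> Es H \<inter> V \<times> W"
    "maximal \<theta> (H\<lparr>Vs := V, Ws := W, Es := E\<rparr>)"
    "mutheta \<theta> H \<le> mutheta \<theta> (H\<lparr>Vs := V, Ws := W, Es := E\<rparr>)"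
proof -
  define S where "S = {(V, W, E). V \<subseteq> Vs H \<and> W \<subseteq> Ws H \<and> E \<subseteq> Es H \<inter> V \<times> W}"
  define F where "F = (\<lambda>(V, W, E). mutheta \<theta> (H\<lparr>Vs := V, Ws := W, Es := E\<rparr>))"
  have "S \<subseteq> Pow (Vs H) \<times> Pow (Ws H) \<times> Pow (Vs H \<times> Ws H)"
    by (auto simp: S_def)
  then have "finite S"
    by (rule finite_subset) (use assms(1,2) in auto)
  have top: "(Vs H, Ws H, Es H) \<in> S"
    using assms(3) by (auto simp: S_def)
  obtain V W E where VWE: "(V, W, E) \<in> S" "F (V, W, E) = Max (F ` S)"
    using Max_in[of "F ` S"] \<open>finite S\<close> top by fastforce
  have max: "F x \<le> F (V, W, E)" if "x \<in> S" for x
    using VWE(2) \<open>finite S\<close> that by simp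
  show thesis
  proof
    show "V \<subseteq> Vs H" "W \<subseteq> Ws H" "E \<subseteq> Es H \<inter> V \<times> W"
      using VWE(1) by (auto simp: S_def)
    show "mutheta \<theta> H \<le> mutheta \<theta> (H\<lparr>Vs := V, Ws := W, Es := E\<rparr>)"
      using max[OF top] by (simp add: F_def)
    show "maximal \<theta> (H\<lparr>Vs := V, Ws := W, Es := E\<rparr>)"
      unfolding maximal_def
    proof (intro allI impI)
      fix V' W' E'
      assume "V' \<subseteq> Vs (H\<lparr>Vs := V, Ws := W, Es := E\<rparr>)" "W' \<subseteq> Ws (H\<lparr>Vs := V, Ws := W, Es := E\<rparr>)"
        "E' \<subseteq> Es (H\<lparr>Vs := V, Ws := W, Es := E\<rparr>) \<inter> V' \<times> W'"
      then have "(V', W', E') \<in> S"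
        using VWE(1) by (auto simp: S_def)
      from max[OF this]
      show "mutheta \<theta> (H\<lparr>Vs := V, Ws := W, Es := E\<rparr>\<lparr>Vs := V', Ws := W', Es := E'\<rparr>)
          \<le> mutheta \<theta> (H\<lparr>Vs := V, Ws := W, Es := E\<rparr>)"
        by (simp add: F_def)
    qed
  qed
qed

definition gap_product :: "gcd_graph \<Rightarrow> real" where
  "gap_product G = (\<Prod>q\<in>Ps G. real q ^ nat \<bar>ff G q - gg G q\<bar>)"

lemma quality_eq_gap_product: "quality \<theta> G = mutheta \<theta> G * gap_product G"
  by (simp add: quality_def gap_product_def)

lemma gap_product_nonneg: "0 \<le> gap_product G"
  by (simp add: gap_product_def prod_nonneg)

lemma gap_product_adjoin_prime:
  assumes "finite (Ps G)" "p \<notin> Ps G"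
  shows "gap_product (adjoin_prime G p f g) = real p ^ nat \<bar>f - g\<bar> * gap_product G"
proof -
  have "(\<Prod>q\<in>Ps G. real q ^ nat \<bar>((ff G)(p := f)) q - ((gg G)(p := g)) q\<bar>) = gap_product G"
    unfolding gap_product_def using assms(2) by (intro prod.cong) auto
  then show ?thesis
    using assms by (simp add: gap_product_def adjoin_prime_def)
qed

lemma nontrivial_if_mutheta_pos: "0 < mutheta \<theta> G \<Longrightarrow> nontrivial G"
  by (auto simp: nontrivial_def mutheta_def Defs.density_def)

lemma exists_maximal_gcd_subgraph:
  assumes H: "is_gcd_subgraph H G" and pos: "0 < mutheta \<theta> H"
  obtains G' where "is_gcd_subgraph G' G" "nontrivial G'" "maximal \<theta> G'"
    "Vs G' \<subseteq> Vs H" "Ws G' \<subseteq> Ws H" "Es G' \<subseteq> Es H"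
    "Ps G' = Ps H" "ff G' = ff H" "gg G' = gg H" "mutheta \<theta> H \<le> mutheta \<theta> G'"
proof -
  have "finite (Vs H)" "finite (Ws H)" "Es H \<subseteq> Vs H \<times> Ws H"
    using H by (auto simp: is_gcd_subgraph_def is_gcd_graph_def)
  then obtain V W E where VWE: "V \<subseteq> Vs H" "W \<subseteq> Ws H" "E \<subseteq> Es H \<inter> V \<times> W"
    "maximal \<theta> (H\<lparr>Vs := V, Ws := W, Es := E\<rparr>)"
    "mutheta \<theta> H \<le> mutheta \<theta> (H\<lparr>Vs := V, Ws := W, Es := E\<rparr>)"
    by (rule exists_maximal_restriction)
  show thesis
  proof (rule that[of "H\<lparr>Vs := V, Ws := W, Es := E\<rparr>"])
    show "is_gcd_subgraph (H\<lparr>Vs := V, Ws := W, Es := E\<rparr>) G"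
      using H VWE(1-3) by (rule is_gcd_subgraph_restrict)
    show "nontrivial (H\<lparr>Vs := V, Ws := W, Es := E\<rparr>)"
      using pos VWE(5) by (intro nontrivial_if_mutheta_pos[where \<theta> = \<theta>]) simp
  qed (use VWE in auto)
qed

lemma exists_maximal_refinement:
  assumes G: "is_gcd_graph G" and p: "p \<notin> Ps G"
    and sub: "is_gcd_subgraph (adjoin_prime (induced_subgraph G V W) p f g) G"
    and dense: "c * mutheta \<theta> G \<le> mutheta \<theta> (induced_subgraph G V W) * real p ^ nat \<bar>f - g\<bar>"
    and pos: "0 < c * mutheta \<theta> G"
  obtains G' where "is_gcd_subgraph G' G" "nontrivial G'" "maximal \<theta> G'"
    "Ps G' = Ps G \<union> {p}" "RR G' \<subseteq> RR G - {p}" "ff G' p = f" "gg G' p = g"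
    "Vs G' \<subseteq> V" "Ws G' \<subseteq> W" "c * quality \<theta> G \<le> quality \<theta> G'"
proof -
  define H where "H = adjoin_prime (induced_subgraph G V W) p f g"
  have "prime p"
    using sub by (simp add: is_gcd_subgraph_def is_gcd_graph_def adjoin_prime_def)
  then have "0 < real p ^ nat \<bar>f - g\<bar>"
    by (simp add: prime_gt_0_nat)
  moreover have "0 < mutheta \<theta> (induced_subgraph G V W) * real p ^ nat \<bar>f - g\<bar>"
    using pos dense by linarith
  ultimately have "0 < mutheta \<theta> H"
    by (simp add: H_def zero_less_mult_iff)
  then obtain G' where G': "is_gcd_subgraph G' G" "nontrivial G'" "maximal \<theta> G'"
    "Vs G' \<subseteq> Vs H" "Ws G' \<subseteq> Ws H" "Es G' \<subseteq> Es H"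
    "Ps G' = Ps H" "ff G' = ff H" "gg G' = gg H" "mutheta \<theta> H \<le> mutheta \<theta> G'"
    using exists_maximal_gcd_subgraph[OF sub[folded H_def]] by blast
  have H: "Vs H = V" "Ws H = W" "Es H = Es G \<inter> V \<times> W" "Ps H = insert p (Ps G)"
    "ff H p = f" "gg H p = g"
    by (simp_all add: H_def adjoin_prime_def)
  have "gap_product G' = real p ^ nat \<bar>f - g\<bar> * gap_product G"
    using gap_product_adjoin_prime[of "induced_subgraph G V W" p f g] G p G'(7-9)
    by (simp add: H_def gap_product_def is_gcd_graph_def)
  have "c * quality \<theta> G = (c * mutheta \<theta> G) * gap_product G"
    by (simp add: quality_eq_gap_product)
  also have "\<dots> \<le> (mutheta \<theta> H * real p ^ nat \<bar>f - g\<bar>) * gap_product G"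
    using dense gap_product_nonneg[of G] by (intro mult_right_mono) (simp_all add: H_def)
  also have "\<dots> \<le> (mutheta \<theta> G' * real p ^ nat \<bar>f - g\<bar>) * gap_product G"
    using G'(10) \<open>0 < real p ^ nat \<bar>f - g\<bar>\<close> gap_product_nonneg[of G]
    by (intro mult_right_mono) auto
  also have "\<dots> = quality \<theta> G'"
    using \<open>gap_product G' = _\<close> by (simp add: quality_eq_gap_product)
  finally have "c * quality \<theta> G \<le> quality \<theta> G'" .
  moreover have "RR G' \<subseteq> RR G - {p}"
    using G'(6,7) H by (auto simp: RR_def)
  ultimately show thesis
    using that G' H by auto
qed

lemma denominator_exact_if_nonneg_exponents:
  assumes "is_gcd_subgraph G' G" "Ps G' = Ps G \<union> {p}"
    and "\<forall>x\<in>Vs G' \<union> Ws G'. 0 \<le> ep p x" "0 \<le> ff G' p" "0 \<le> gg G' p"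
  shows "denominator_exact G' G"
proof -
  have "prime p" "\<forall>x\<in>Vs G' \<union> Ws G'. 0 < x"
    using assms(1,2) by (auto simp: is_gcd_subgraph_def is_gcd_graph_def)
  then show ?thesis
    using assms multiplicity_num_den(2)[of _ p] by (auto simp: denominator_exact_def neg_part_def)
qed

lemma numerator_exact_if_nonpos_exponents:
  assumes "is_gcd_subgraph G' G" "Ps G' = Ps G \<union> {p}"
    and "\<forall>x\<in>Vs G' \<union> Ws G'. ep p x \<le> 0" "ff G' p \<le> 0" "gg G' p \<le> 0"
  shows "numerator_exact G' G"
proof -
  have "prime p" "\<forall>x\<in>Vs G' \<union> Ws G'. 0 < x"
    using assms(1,2) by (auto simp: is_gcd_subgraph_def is_gcd_graph_def)
  then show ?thesis
    using assms multiplicity_num_den(1)[of _ p] by (auto simp: numerator_exact_def pos_part_def)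
qed

section \<open>Splitting the edges at a prime\<close>

lemma staircase_area_le:
  fixes a0 a1 a2 b0 b1 b2 A B :: real
  assumes "0 \<le> a0" "0 \<le> a1" "0 \<le> a2" "0 \<le> b0" "0 \<le> b1" "0 \<le> b2"
    and "a2 \<le> a0" "b1 \<le> b0" "a0 + a1 \<le> A" "b0 + b2 \<le> B"
  shows "a0 * b0 + a1 * b1 + a2 * b2 \<le> A * B"
proof -
  have "a0 * b0 + a1 * b1 + a2 * b2 \<le> a0 * b0 + a1 * b0 + a0 * b2"
    using assms by (intro add_mono mult_left_mono mult_right_mono) auto
  also have "\<dots> \<le> (a0 + a1) * (b0 + b2)"
    using assms by (simp add: algebra_simps)
  also have "\<dots> \<le> A * B"
    using assms by (intro mult_mono) auto
  finally show ?thesis .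
qed

lemma one_minus_inverse_powr_bounds:
  fixes x a :: real
  assumes "1 < x" "0 < a" "a < 2"
  shows "0 < 1 - 1 / x powr a" and "(1 - 1 / x powr a) * (1 + 1 / x\<^sup>2) < 1"
proof -
  have "1 < x powr a"
    using assms by simp
  then show "0 < 1 - 1 / x powr a"
    by (simp add: divide_less_eq)
  have "x powr a < x\<^sup>2"
    using assms powr_less_cancel_iff[of x a 2] by simp
  then have "1 - 1 / x powr a < 1 - 1 / x\<^sup>2"
    using \<open>1 < x powr a\<close> assms(1)
    by (intro diff_strict_left_mono divide_strict_left_mono) (auto intro: mult_pos_pos)
  then have "(1 - 1 / x powr a) * (1 + 1 / x\<^sup>2) < (1 - 1 / x\<^sup>2) * (1 + 1 / x\<^sup>2)"
    using assms by (intro mult_strict_right_mono) (auto intro: add_pos_nonneg)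
  also have "\<dots> = 1 - (1 / x\<^sup>2)\<^sup>2"
    by (simp add: algebra_simps power2_eq_square)
  finally show "(1 - 1 / x powr a) * (1 + 1 / x\<^sup>2) < 1"
    by (smt (verit) zero_le_power2)
qed

locale prime_edge_split =
  fixes G :: gcd_graph and p :: nat and k :: int
  assumes gcd_graph: "is_gcd_graph G"
    and prime: "prime p" and new_prime: "p \<notin> Ps G" and nonzero: "k \<noteq> 0"
    and edges: "\<forall>(v, w)\<in>Es G.
      (ep p v, ep p w) \<in> {(k - 1, k), (k, k - 1), (k, k), (k, k + 1), (k + 1, k)}"
begin

definition V_at :: "int set \<Rightarrow> rat set" where
  "V_at A = {v \<in> Vs G. ep p v \<in> A}"

definition W_at :: "int set \<Rightarrow> rat set" where
  "W_at A = {w \<in> Ws G. ep p w \<in> A}"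

text \<open>Piece 0 holds the edges whose two exponents lie in \<open>{k, k + sgn k}\<close>; since they are
  not both \<open>k + sgn k\<close>, the exponent of \<open>p\<close> in the gcd is \<open>k\<close>. Pieces 1 and 2 hold the
  edges where \<open>v\<close>, respectively \<open>w\<close>, has the exponent \<open>k - sgn k\<close> nearer to zero.\<close>

definition piece_V :: "nat \<Rightarrow> rat set" where
  "piece_V = (!) [V_at {k, k + sgn k}, V_at {k - sgn k}, V_at {k}]"

definition piece_W :: "nat \<Rightarrow> rat set" where
  "piece_W = (!) [W_at {k, k + sgn k}, W_at {k}, W_at {k - sgn k}]"

definition piece_f :: "nat \<Rightarrow> int" where
  "piece_f = (!) [k, k - sgn k, k]"

definition piece_g :: "nat \<Rightarrow> int" where
  "piece_g = (!) [k, k, k - sgn k]"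

text \<open>Multiplied by \<open>p\<^bsup>|f - g|\<^esup>\<close>, which the quality gains from the new prime, the weight
  of a piece is the loss factor allowed in part (e) of the theorem.\<close>

definition piece_weight :: "real \<Rightarrow> nat \<Rightarrow> real" where
  "piece_weight c i = (1 - (if piece_f i = k \<and> piece_g i = k then 1 else 0) / real p)\<^sup>2 * c
     / real p ^ nat \<bar>piece_f i - piece_g i\<bar>"

lemma sgn_cases: "sgn k = 1 \<and> 0 < k \<or> sgn k = -1 \<and> k < 0"
  using nonzero by (auto simp: sgn_if)

lemma edge_exponents:
  "(v, w) \<in> Es G \<Longrightarrow> (ep p v, ep p w) \<in> {(k - 1, k), (k, k - 1), (k, k), (k, k + 1), (k + 1, k)}"
  using edges by auto

lemma pieces_cover: "Es G \<subseteq> (\<Union>i\<in>{0, 1, 2}. piece_V i \<times> piece_W i)"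
proof clarify
  fix v w assume vw: "(v, w) \<in> Es G"
  have "ep p v \<in> {k, k + sgn k} \<and> ep p w \<in> {k, k + sgn k} \<or>
      ep p v = k - sgn k \<and> ep p w = k \<or> ep p v = k \<and> ep p w = k - sgn k"
    using edge_exponents[OF vw] sgn_cases by auto
  then show "(v, w) \<in> (\<Union>i\<in>{0, 1, 2}. piece_V i \<times> piece_W i)"
    using vw Es_subset[OF gcd_graph] by (auto simp: piece_V_def piece_W_def V_at_def W_at_def)
qed

lemma pieces_disjoint: "disjoint_family_on (\<lambda>i. piece_V i \<times> piece_W i) {0, 1, 2}"
  using sgn_cases by (auto simp: disjoint_family_on_def piece_V_def piece_W_def V_at_def W_at_def)

lemma pieces_subset: "i \<in> {0, 1, 2} \<Longrightarrow> piece_V i \<subseteq> Vs G \<and> piece_W i \<subseteq> Ws G"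
  by (auto simp: piece_V_def piece_W_def V_at_def W_at_def)

lemma pieces_area:
  "(\<Sum>i\<in>{0, 1, 2}. muS G (piece_V i) * muS G (piece_W i)) \<le> muS G (Vs G) * muS G (Ws G)"
proof -
  note G = gcd_graph
  have at: "V_at A \<subseteq> Vs G \<union> Ws G" "W_at A \<subseteq> Vs G \<union> Ws G" for A
    by (auto simp: V_at_def W_at_def)
  have disj: "V_at {k, k + sgn k} \<inter> V_at {k - sgn k} = {}" "W_at {k, k + sgn k} \<inter> W_at {k - sgn k} = {}"
    using sgn_cases by (auto simp: V_at_def W_at_def)
  have "muS G (V_at {k, k + sgn k}) + muS G (V_at {k - sgn k})
      = muS G (V_at {k, k + sgn k} \<union> V_at {k - sgn k})"
    using at by (intro muS_union[OF G disj(1), symmetric]) auto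
  also have "\<dots> \<le> muS G (Vs G)"
    by (intro muS_mono[OF G]) (auto simp: V_at_def)
  finally have V: "muS G (V_at {k, k + sgn k}) + muS G (V_at {k - sgn k}) \<le> muS G (Vs G)" .
  have "muS G (W_at {k, k + sgn k}) + muS G (W_at {k - sgn k})
      = muS G (W_at {k, k + sgn k} \<union> W_at {k - sgn k})"
    using at by (intro muS_union[OF G disj(2), symmetric]) auto
  also have "\<dots> \<le> muS G (Ws G)"
    by (intro muS_mono[OF G]) (auto simp: W_at_def)
  finally have W: "muS G (W_at {k, k + sgn k}) + muS G (W_at {k - sgn k}) \<le> muS G (Ws G)" .
  have "muS G (V_at {k}) \<le> muS G (V_at {k, k + sgn k})" "muS G (W_at {k}) \<le> muS G (W_at {k, k + sgn k})"
    using at by (auto intro!: muS_mono[OF G] simp: V_at_def W_at_def)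
  then show ?thesis
    unfolding piece_V_def piece_W_def using at V W
    by (simp add: add.assoc[symmetric]) (intro staircase_area_le muS_nonneg[OF G])
qed

lemma piece_exponents:
  assumes "i \<in> {0, 1, 2}"
  shows "\<forall>x\<in>piece_V i \<union> piece_W i. ep p x \<in> {k - 1, k, k + 1}"
    and "piece_f i \<in> {k - 1, k, k + 1}" "piece_g i \<in> {k - 1, k, k + 1}"
  using assms sgn_cases
  by (auto simp: piece_V_def piece_W_def V_at_def W_at_def piece_f_def piece_g_def)

lemma piece_is_gcd_subgraph:
  assumes i: "i \<in> {0, 1, 2}"
  shows "is_gcd_subgraph
    (adjoin_prime (induced_subgraph G (piece_V i) (piece_W i)) p (piece_f i) (piece_g i)) G"
proof (rule is_gcd_subgraph_adjoin_prime)
  show "is_gcd_subgraph (induced_subgraph G (piece_V i) (piece_W i)) G"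
    using pieces_subset[OF i] by (intro is_gcd_subgraph_induced[OF gcd_graph]) auto
  show "prime p" "p \<notin> Ps (induced_subgraph G (piece_V i) (piece_W i))"
    using prime new_prime by simp_all
  show "\<forall>v\<in>Vs (induced_subgraph G (piece_V i) (piece_W i)).
      pos_part (piece_f i) \<le> pos_part (ep p v) \<and> neg_part (piece_f i) \<le> neg_part (ep p v)"
    using i sgn_cases by (auto simp: piece_V_def V_at_def piece_f_def pos_part_def neg_part_def)
  show "\<forall>w\<in>Ws (induced_subgraph G (piece_V i) (piece_W i)).
      pos_part (piece_g i) \<le> pos_part (ep p w) \<and> neg_part (piece_g i) \<le> neg_part (ep p w)"
    using i sgn_cases by (auto simp: piece_W_def W_at_def piece_g_def pos_part_def neg_part_def)
  show "\<forall>(v, w)\<in>Es (induced_subgraph G (piece_V i) (piece_W i)).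
      min (pos_part (ep p v)) (pos_part (ep p w)) = min (pos_part (piece_f i)) (pos_part (piece_g i)) \<and>
      min (neg_part (ep p v)) (neg_part (ep p w)) = min (neg_part (piece_f i)) (neg_part (piece_g i))"
    using i sgn_cases
    by (auto simp: piece_V_def piece_W_def V_at_def W_at_def piece_f_def piece_g_def
        pos_part_def neg_part_def dest!: edge_exponents)
qed

lemma sum_piece_weight: "sum (piece_weight c) {0, 1, 2} = c * (1 + 1 / real p ^ 2)"
proof -
  have "sum (piece_weight c) {0, 1, 2} = (1 - 1 / real p)\<^sup>2 * c + c / real p + c / real p"
    using sgn_cases by (auto simp: piece_weight_def piece_f_def piece_g_def)
  also have "\<dots> = c * (1 + 1 / real p ^ 2)"
    using prime_gt_0_nat[OF prime] by (simp add: field_simps power2_eq_square)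
  finally show ?thesis .
qed

lemma exists_dense_piece:
  assumes "nontrivial G" "1 \<le> \<theta>" "c * (1 + 1 / real p ^ 2) < 1"
  obtains V W f g where
    "is_gcd_subgraph (adjoin_prime (induced_subgraph G V W) p f g) G"
    "\<forall>x\<in>V \<union> W. ep p x \<in> {k - 1, k, k + 1}" "f \<in> {k - 1, k, k + 1}" "g \<in> {k - 1, k, k + 1}"
    "(1 - (if f = k \<and> g = k then 1 else 0) / real p)\<^sup>2 * c * mutheta \<theta> G
       \<le> mutheta \<theta> (induced_subgraph G V W) * real p ^ nat \<bar>f - g\<bar>"
proof -
  obtain i where i: "i \<in> {0, 1, 2}" and dense:
    "piece_weight c i * mutheta \<theta> G \<le> mutheta \<theta> (induced_subgraph G (piece_V i) (piece_W i))"
    using exists_dense_induced_subgraph[OF gcd_graph assms(1,2) _ _ pieces_disjoint pieces_cover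
        pieces_area, of "piece_weight c"] pieces_subset sum_piece_weight assms(3)
    by auto
  have "0 < real p ^ nat \<bar>piece_f i - piece_g i\<bar>"
    using prime_gt_0_nat[OF prime] by simp
  then have "(1 - (if piece_f i = k \<and> piece_g i = k then 1 else 0) / real p)\<^sup>2 * c * mutheta \<theta> G
      \<le> mutheta \<theta> (induced_subgraph G (piece_V i) (piece_W i)) * real p ^ nat \<bar>piece_f i - piece_g i\<bar>"
    using dense by (simp add: piece_weight_def field_simps)
  with piece_is_gcd_subgraph[OF i] piece_exponents[OF i] show thesis
    by (rule that)
qed

lemma exists_maximal_exact_refinement:
  assumes "nontrivial G" "1 \<le> \<theta>" "0 < c" "c * (1 + 1 / real p ^ 2) < 1"
  obtains G' where "is_gcd_subgraph G' G" "nontrivial G'" "maximal \<theta> G'"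
    "Ps G' = Ps G \<union> {p}" "RR G' \<subseteq> RR G - {p}"
    "ff G' p \<in> {k - 1, k, k + 1}" "gg G' p \<in> {k - 1, k, k + 1}"
    "0 < k \<Longrightarrow> denominator_exact G' G" "k < 0 \<Longrightarrow> numerator_exact G' G"
    "(1 - (if ff G' p = k \<and> gg G' p = k then 1 else 0) / real p)\<^sup>2 * c * quality \<theta> G
       \<le> quality \<theta> G'"
proof -
  obtain V W f g where sub: "is_gcd_subgraph (adjoin_prime (induced_subgraph G V W) p f g) G"
    and exps: "\<forall>x\<in>V \<union> W. ep p x \<in> {k - 1, k, k + 1}"
    and fg: "f \<in> {k - 1, k, k + 1}" "g \<in> {k - 1, k, k + 1}"
    and dense: "(1 - (if f = k \<and> g = k then 1 else 0) / real p)\<^sup>2 * c * mutheta \<theta> G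
       \<le> mutheta \<theta> (induced_subgraph G V W) * real p ^ nat \<bar>f - g\<bar>"
    by (rule exists_dense_piece[OF assms(1,2,4)])
  have "0 < (1 - (if f = k \<and> g = k then 1 else 0) / real p)\<^sup>2 * c * mutheta \<theta> G"
    using prime_gt_1_nat[OF prime] assms(3) mutheta_pos[OF gcd_graph assms(1)] by simp
  then obtain G' where G': "is_gcd_subgraph G' G" "nontrivial G'" "maximal \<theta> G'"
    "Ps G' = Ps G \<union> {p}" "RR G' \<subseteq> RR G - {p}" "ff G' p = f" "gg G' p = g"
    "Vs G' \<subseteq> V" "Ws G' \<subseteq> W"
    "(1 - (if f = k \<and> g = k then 1 else 0) / real p)\<^sup>2 * c * quality \<theta> G \<le> quality \<theta> G'"
    using exists_maximal_refinement[OF gcd_graph new_prime sub dense] by blast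
  have exps': "\<forall>x\<in>Vs G' \<union> Ws G'. ep p x \<in> {k - 1, k, k + 1}"
    using exps G'(8,9) by blast
  show thesis
  proof (rule that[OF G'(1-5)])
    show "denominator_exact G' G" if "0 < k"
      using denominator_exact_if_nonneg_exponents[OF G'(1,4)] exps' fg G'(6,7) that by force
    show "numerator_exact G' G" if "k < 0"
      using numerator_exact_if_nonpos_exponents[OF G'(1,4)] exps' fg G'(6,7) that by force
  qed (use G'(6,7,10) fg in simp_all)
qed

end

theorem lemma11p1:
  fixes \<tau> M :: real and G :: gcd_graph and p :: nat and kp :: int
  assumes "0 < \<tau>" and "\<tau> < 1/100" and "M \<ge> 2"
    and "is_gcd_graph G" and "maximal (2 + \<tau>) G" and "nontrivial G" and "structured G"
    and "p \<in> RR G" and "real p > C6 \<tau> M"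
    and "\<forall>(v,w)\<in>Es G. (ep p v, ep p w) \<in>
           {(kp - 1, kp), (kp, kp - 1), (kp, kp), (kp, kp + 1), (kp + 1, kp)}"
  shows "\<exists>G'. is_gcd_subgraph G' G \<and> nontrivial G' \<and> maximal (2 + \<tau>) G' \<and>
           Ps G' = Ps G \<union> {p} \<and>
           RR G' \<subseteq> RR G - {p} \<and>
           ff G' p \<in> {kp - 1, kp, kp + 1} \<and> gg G' p \<in> {kp - 1, kp, kp + 1} \<and>
           (kp > 0 \<longrightarrow> denominator_exact G' G) \<and>
           (kp < 0 \<longrightarrow> numerator_exact G' G) \<and>
           quality (2 + \<tau>) G' \<ge> quality (2 + \<tau>) G
              * (1 - (if ff G' p = kp \<and> gg G' p = kp then 1 else 0) / real p)^2
              * (1 - 1 / real p powr (1 + \<tau> / 4))"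
proof -
  note G = \<open>is_gcd_graph G\<close> \<open>nontrivial G\<close> and edges = assms(10)
  have p: "prime p" "p \<notin> Ps G"
    using \<open>p \<in> RR G\<close> by (auto simp: RR_def)
  then have "1 < real p"
    using prime_gt_1_nat by simp
  have "kp \<noteq> 0"
    using RR_exponents_same_sign[OF G(1) \<open>p \<in> RR G\<close>] edges by fastforce
  then interpret prime_edge_split G p kp
    using G(1) p edges by unfold_locales
  define c where "c = 1 - 1 / real p powr (1 + \<tau> / 4)"
  have c: "0 < c" "c * (1 + 1 / real p ^ 2) < 1"
    using one_minus_inverse_powr_bounds[OF \<open>1 < real p\<close>, of "1 + \<tau> / 4"] assms(1,2)
    by (simp_all add: c_def)
  have "1 \<le> 2 + \<tau>"
    using assms(1) by simp
  obtain G' where "is_gcd_subgraph G' G" "nontrivial G'" "maximal (2 + \<tau>) G'"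
    "Ps G' = Ps G \<union> {p}" "RR G' \<subseteq> RR G - {p}"
    "ff G' p \<in> {kp - 1, kp, kp + 1}" "gg G' p \<in> {kp - 1, kp, kp + 1}"
    "0 < kp \<Longrightarrow> denominator_exact G' G" "kp < 0 \<Longrightarrow> numerator_exact G' G"
    "(1 - (if ff G' p = kp \<and> gg G' p = kp then 1 else 0) / real p)\<^sup>2 * c * quality (2 + \<tau>) G
       \<le> quality (2 + \<tau>) G'"
    using exists_maximal_exact_refinement[OF G(2) \<open>1 \<le> 2 + \<tau>\<close> c] by blast
  then show ?thesis
    by (intro exI[of _ G']) (simp add: c_def mult_ac)
qed

end
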